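(* Let $c_1,c_2>0$ be constants and let $G$ be a $(2n,d,b)$-clustered regular graph with $\frac bd\le c_1n^{-1/2}$ and $\lambda\le c_2n^{-1/4}$. Let $c\in\mathbb N$ be any constant. Consider the 2-Choices dynamics on $G$ started from a configuration $\mathbf c^{(t)}$ such that $|s^{(t)}_i|\ge n-\log n$ for each $i\in\{1,2\}$. Then, with high probability, for the next $n^c$ rounds the process lies in the set of configurations such that $|s_i|\ge n-\mathcal{O}\big(\frac{\log n}{\log\log n}\big)$ for each $i\in\{1,2\}$, and the sign of each bias is preserved.
   Context: A $(2n,d,b)$-clustered regular graph is a graph $G=(V,E)$ with $V=V_1\cup V_2$ disjoint, $|V_1|=|V_2|=n$, every node of degree $d$, every node of $V_1$ having exactly $b$ neighbors in $V_2$ and vice versa; each $V_i$ induces a $(d-b)$-regular graph, assumed connected and non-bipartite. $\lambda:=\max(|\lambda_2|,|\lambda_n|,|\mu_2|,|\mu_n|)$, where $\lambda_1\ge\dots\ge\lambda_n$ and $\mu_1\ge\dots\ge\mu_n$ are the eigenvalues of the simple random walk transition matrices of the subgraphs induced by $V_1$ and $V_2$. $s^{(t)}_i$ is the number of red minus the number of blue nodes in $V_i$ at time $t$. 2-Choices dynamics: in each synchronous round every node independently samples two neighbors uniformly at random with replacement and, if both have the same color, adopts it; otherwise it keeps its color. "With high probability" means with probability at least $1-\mathcal{O}(n^{-\gamma})$ for some constant $\gamma>0$; asymptotic notation refers to $n\to\infty$. *)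

theory Defs
  imports "HOL-Probability.Product_PMF" "Jordan_Normal_Form.Char_Poly"
begin

definition cluster :: "nat \<Rightarrow> nat \<Rightarrow> nat set" where
  "cluster n i = (if i = 1 then {0..<n} else {n..<2*n})"

definition connected_on :: "nat set \<Rightarrow> (nat \<Rightarrow> nat \<Rightarrow> bool) \<Rightarrow> bool" where
  "connected_on S E \<longleftrightarrow>
     (\<forall>u\<in>S. \<forall>v\<in>S. (\<lambda>x y. x \<in> S \<and> y \<in> S \<and> E x y)\<^sup>*\<^sup>* u v)"

definition bipartite_on :: "nat set \<Rightarrow> (nat \<Rightarrow> nat \<Rightarrow> bool) \<Rightarrow> bool" where
  "bipartite_on S E \<longleftrightarrow> (\<exists>f :: nat \<Rightarrow> bool. \<forall>u\<in>S. \<forall>v\<in>S. E u v \<longrightarrow> f u \<noteq> f v)"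

definition clustered_regular :: "nat \<Rightarrow> nat \<Rightarrow> nat \<Rightarrow> (nat \<Rightarrow> nat \<Rightarrow> bool) \<Rightarrow> bool" where
  "clustered_regular n d b E \<longleftrightarrow>
     0 < n \<and>
     (\<forall>u v. E u v \<longrightarrow> u < 2*n \<and> v < 2*n) \<and>
     (\<forall>u v. E u v \<longrightarrow> E v u) \<and>
     (\<forall>u. \<not> E u u) \<and>
     (\<forall>v < 2*n. card {u. E v u} = d) \<and>
     (\<forall>v \<in> cluster n 1. card {u \<in> cluster n 2. E v u} = b) \<and>
     (\<forall>v \<in> cluster n 2. card {u \<in> cluster n 1. E v u} = b) \<and>
     (\<forall>i \<in> {1,2}. connected_on (cluster n i) E \<and> \<not> bipartite_on (cluster n i) E)"

text \<open>Transition matrix of the simple random walk on the subgraph induced by V_i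
  (which is (d-b)-regular), indexed by 0..<n via the offset of the cluster.\<close>

definition walk_matrix :: "nat \<Rightarrow> nat \<Rightarrow> nat \<Rightarrow> (nat \<Rightarrow> nat \<Rightarrow> bool) \<Rightarrow> nat \<Rightarrow> real mat" where
  "walk_matrix n d b E i =
     (let off = (if i = 1 then 0 else n) in
      mat n n (\<lambda>(j,k). if E (off + j) (off + k) then 1 / real (d - b) else 0))"

text \<open>Eigenvalues (with multiplicity) in non-increasing order:
  lambda_1 \<ge> ... \<ge> lambda_n. The matrix is symmetric, so the
  characteristic polynomial splits over the reals.\<close>

definition eigenvalues_desc :: "real mat \<Rightarrow> real list" where
  "eigenvalues_desc A = rev (sorted_list_of_multiset (proots (char_poly A)))"

definition lambda_param :: "nat \<Rightarrow> nat \<Rightarrow> nat \<Rightarrow> (nat \<Rightarrow> nat \<Rightarrow> bool) \<Rightarrow> real" where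
  "lambda_param n d b E =
     Max {\<bar>eigenvalues_desc (walk_matrix n d b E i) ! k\<bar> | i k. i \<in> {1,2} \<and> k \<in> {1, n - 1}}"

text \<open>Configurations: True = red, False = blue.\<close>

definition bias :: "nat set \<Rightarrow> (nat \<Rightarrow> bool) \<Rightarrow> real" where
  "bias S x = real (card {v \<in> S. x v}) - real (card {v \<in> S. \<not> x v})"

definition node_update :: "(nat \<Rightarrow> nat \<Rightarrow> bool) \<Rightarrow> (nat \<Rightarrow> bool) \<Rightarrow> nat \<Rightarrow> bool pmf" where
  "node_update E x v =
     bind_pmf (pmf_of_set {u. E v u}) (\<lambda>u1.
     bind_pmf (pmf_of_set {u. E v u}) (\<lambda>u2.
     return_pmf (if x u1 = x u2 then x u1 else x v)))"

definition two_choices_step :: "nat \<Rightarrow> (nat \<Rightarrow> nat \<Rightarrow> bool) \<Rightarrow> (nat \<Rightarrow> bool) \<Rightarrow> (nat \<Rightarrow> bool) pmf" where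
  "two_choices_step n E x = Pi_pmf {0..<2*n} False (node_update E x)"

text \<open>run n E T x: distribution of the list of the next T configurations
  [x^(1), ..., x^(T)] starting from x = x^(0).\<close>

fun two_choices_run :: "nat \<Rightarrow> (nat \<Rightarrow> nat \<Rightarrow> bool) \<Rightarrow> nat \<Rightarrow> (nat \<Rightarrow> bool) \<Rightarrow> (nat \<Rightarrow> bool) list pmf" where
  "two_choices_run n E 0 x = return_pmf []"
| "two_choices_run n E (Suc T) x =
     bind_pmf (two_choices_step n E x) (\<lambda>y. map_pmf (Cons y) (two_choices_run n E T y))"

end

theory Submission
  imports Defs "Jordan_Normal_Form.Schur_Decomposition" "HOL-Real_Asymp.Real_Asymp"
begin

text \<open>The spectral hypothesis makes each cluster dense: the squared eigenvalues of the walk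
  matrix \<open>W\<close> of \<open>V\<^sub>i\<close> sum to the trace of \<open>W\<^sup>2\<close>, which is \<open>n / (d - b)\<close>, so
  \<open>n / (d - b) \<le> 1 + n \<lambda>\<^sup>2 = O(\<surd>n)\<close> and \<open>d \<ge> ln\<^sup>2 n\<close>.
  Fix in each cluster the majority colour of the initial configuration. If at most \<open>(ln n)/2\<close>
  nodes of a cluster disagree with it, a node disagrees after one round with probability at most
  the squared fraction of disagreeing neighbours, plus twice that fraction if it already disagrees;
  summed over the cluster and using \<open>b/d = O(n\<^sup>-\<^sup>1\<^sup>/\<^sup>2)\<close>, the expected number of
  disagreeing nodes is \<open>O(1)\<close>. The nodes update independently, so a Chernoff bound with
  parameter \<open>ln n\<close> shows that more than \<open>C ln n / (2 ln ln n)\<close> of them disagree with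
  probability \<open>O(n\<^sup>-\<^sup>c\<^sup>-\<^sup>1)\<close>, and a union bound over the \<open>n\<^sup>c\<close> rounds concludes.\<close>

lemma real_symmetric_eigenvalue_real:
  fixes A :: "real mat"
  assumes A: "A \<in> carrier_mat n n"
    and sym: "\<And>i j. i < n \<Longrightarrow> j < n \<Longrightarrow> A $$ (i,j) = A $$ (j,i)"
    and eig: "eigenvalue (map_mat complex_of_real A) a"
  shows "Im a = 0"
proof -
  let ?C = "map_mat complex_of_real A"
  have C: "?C \<in> carrier_mat n n" using A by simp
  obtain v where v: "v \<in> carrier_vec n" "v \<noteq> 0\<^sub>v n" "?C *\<^sub>v v = a \<cdot>\<^sub>v v"
    using eig C unfolding eigenvalue_def eigenvector_def by auto
  have ev: "(\<Sum>j<n. complex_of_real (A $$ (i,j)) * v $ j) = a * v $ i" if "i < n" for i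
  proof -
    have "(?C *\<^sub>v v) $ i = (a \<cdot>\<^sub>v v) $ i" using v(3) by simp
    thus ?thesis using that A v(1) by (simp add: scalar_prod_def lessThan_atLeast0)
  qed
  define N where "N = (\<Sum>i<n. (cmod (v $ i))^2)"
  have "N > 0"
  proof -
    obtain i where i: "i < n" "v $ i \<noteq> 0"
      using v(1,2) by (metis vec_eq_iff carrier_vecD index_zero_vec(1,2))
    have "(cmod (v $ i))^2 \<le> N" unfolding N_def using i by (intro member_le_sum) auto
    moreover have "(cmod (v $ i))^2 > 0" using i by simp
    ultimately show ?thesis by linarith
  qed
  \<comment> \<open>The Hermitian form \<open>v\<^sup>* A v\<close> equals \<open>a |v|\<^sup>2\<close>, and it is real because \<open>A\<close> is real symmetric.\<close>
  define S where "S = (\<Sum>i<n. cnj (v $ i) * (\<Sum>j<n. complex_of_real (A $$ (i,j)) * v $ j))"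
  have "S = (\<Sum>i<n. cnj (v $ i) * (a * v $ i))"
    unfolding S_def by (intro sum.cong refl) (simp add: ev)
  also have "\<dots> = a * (\<Sum>i<n. v $ i * cnj (v $ i))"
    by (simp add: sum_distrib_left algebra_simps)
  also have "\<dots> = a * (\<Sum>i<n. complex_of_real ((cmod (v $ i))^2))"
    by (simp only: complex_norm_square)
  also have "\<dots> = a * complex_of_real N"
    unfolding N_def by simp
  finally have S_eig: "S = a * complex_of_real N" .
  have "cnj S = (\<Sum>j<n. \<Sum>i<n. v $ i * (complex_of_real (A $$ (i,j)) * cnj (v $ j)))"
    unfolding S_def by (subst sum.swap) (simp add: sum_distrib_left)
  also have "\<dots> = S"
    unfolding S_def by (auto simp: sum_distrib_left sym intro!: sum.cong)
  finally have "cnj S = S" .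
  with S_eig have "cnj a * complex_of_real N = a * complex_of_real N"
    by (metis complex_cnj_complex_of_real complex_cnj_mult)
  with \<open>N > 0\<close> have "cnj a = a" by simp
  thus ?thesis by (simp add: complex_eq_iff)
qed

lemma real_symmetric_char_poly_splits:
  fixes A :: "real mat"
  assumes A: "A \<in> carrier_mat n n"
    and sym: "\<And>i j. i < n \<Longrightarrow> j < n \<Longrightarrow> A $$ (i,j) = A $$ (j,i)"
  obtains rs where "char_poly A = (\<Prod>r\<leftarrow>rs. [:- r, 1:])" "length rs = n"
proof -
  interpret of_real_poly: map_poly_inj_idom_hom "of_real :: real \<Rightarrow> complex" ..
  let ?C = "map_mat complex_of_real A"
  have C: "?C \<in> carrier_mat n n" using A by simp
  obtain as where as: "char_poly ?C = (\<Prod>a\<leftarrow>as. [:- a, 1:])" "length as = n"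
    using char_poly_factorized[OF C] by auto
  have real: "Im a = 0" if "a \<in> set as" for a
  proof (rule real_symmetric_eigenvalue_real[OF A sym])
    have "poly (char_poly ?C) a = 0"
      unfolding as(1) using that by (simp add: poly_prod_list prod_list_zero_iff)
    thus "eigenvalue ?C a" using eigenvalue_root_char_poly[OF C] by simp
  qed
  have map_prod: "map_poly complex_of_real (\<Prod>r\<leftarrow>rs. [:- r, 1:]) = (\<Prod>r\<leftarrow>rs. [:- complex_of_real r, 1:])"
    for rs by (induction rs) (simp_all only: list.map prod_list.Cons of_real_poly.hom_mult, simp_all)
  have map_eq: "map (\<lambda>r. [:- complex_of_real r, 1:]) (map Re as) = map (\<lambda>a. [:- a, 1:]) as"
    using real by (auto simp: complex_eq_iff)
  have "map_poly complex_of_real (char_poly A) = char_poly ?C"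
    by (rule of_real_hom.char_poly_hom[OF A, symmetric])
  also have "\<dots> = map_poly complex_of_real (\<Prod>r\<leftarrow>map Re as. [:- r, 1:])"
    unfolding as(1) map_prod map_eq by (rule refl)
  finally have "char_poly A = (\<Prod>r\<leftarrow>map Re as. [:- r, 1:])"
    by (rule of_real_poly.injectivity)
  thus ?thesis using as(2) by (intro that[of "map Re as"]) simp_all
qed

lemma eigenvalues_desc_split:
  assumes "char_poly A = (\<Prod>r\<leftarrow>rs. [:- r, 1:])"
  shows "eigenvalues_desc A = rev (sort rs)"
proof -
  have "proots (\<Prod>r\<leftarrow>rs. [:- r, 1:]) = mset rs"
  proof (induction rs)
    case (Cons a rs)
    have "(\<Prod>r\<leftarrow>rs. [:- r, 1:]) \<noteq> (0::real poly)" by (auto simp: prod_list_zero_iff)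
    hence "proots (\<Prod>r\<leftarrow>a # rs. [:- r, 1:]) = proots [:- a, 1:] + proots (\<Prod>r\<leftarrow>rs. [:- r, 1:])"
      by (simp only: list.map prod_list.Cons, intro proots_mult) auto
    thus ?case using Cons by simp
  qed simp
  thus ?thesis unfolding eigenvalues_desc_def assms by (simp add: sorted_list_of_multiset_mset)
qed

definition mat_trace :: "'a::comm_semiring_0 mat \<Rightarrow> 'a" where
  "mat_trace A = (\<Sum>i<dim_row A. A $$ (i,i))"

lemma mat_trace_mult:
  assumes "A \<in> carrier_mat n m" "B \<in> carrier_mat m n"
  shows "mat_trace (A * B) = (\<Sum>i<n. \<Sum>k<m. A $$ (i,k) * B $$ (k,i))"
  unfolding mat_trace_def using assms by (intro sum.cong) (auto simp: scalar_prod_def lessThan_atLeast0)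

lemma mat_trace_mult_comm:
  assumes "A \<in> carrier_mat n m" "B \<in> carrier_mat m n"
  shows "mat_trace (A * B) = mat_trace (B * A)"
  unfolding mat_trace_mult[OF assms] mat_trace_mult[OF assms(2,1)]
  by (subst sum.swap) (simp add: mult.commute)

lemma mat_trace_similar:
  assumes "similar_mat_wit A B P Q"
  shows "mat_trace A = mat_trace B"
proof -
  define n where "n = dim_row A"
  note wit = similar_mat_witD[OF n_def assms]
  have car: "B \<in> carrier_mat n n" "P \<in> carrier_mat n n" "Q \<in> carrier_mat n n"
    by (fact wit(5-7))+
  have "mat_trace A = mat_trace (P * (B * Q))"
    unfolding wit(3) using car by (simp add: assoc_mult_mat[of P n n B n Q n])
  also have "\<dots> = mat_trace (B * Q * P)"
    using car by (intro mat_trace_mult_comm) auto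
  also have "B * Q * P = B"
    using car wit(2) by (simp add: assoc_mult_mat[of B n n Q n P n])
  finally show ?thesis .
qed

lemma mat_trace_square_upper_triangular:
  fixes B :: "'a::comm_semiring_1 mat"
  assumes B: "B \<in> carrier_mat n n" and ut: "upper_triangular B"
  shows "mat_trace (B * B) = (\<Sum>i<n. (B $$ (i,i))^2)"
proof -
  have "B $$ (i,k) * B $$ (k,i) = (if k = i then (B $$ (i,i))^2 else 0)" if "i < n" "k < n" for i k
    using B ut that unfolding upper_triangular_def
    by (cases "k < i"; cases "i < k") (auto simp: power2_eq_square)
  thus ?thesis unfolding mat_trace_mult[OF B B] by simp
qed

lemma sum_squares_eigenvalues_eq_trace:
  fixes A :: "'a::conjugatable_ordered_field mat"
  assumes A: "A \<in> carrier_mat n n" and split: "char_poly A = (\<Prod>r\<leftarrow>rs. [:- r, 1:])"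
  shows "(\<Sum>r\<leftarrow>rs. r^2) = mat_trace (A * A)"
proof -
  obtain B P Q where "schur_decomposition A rs = (B,P,Q)"
    by (cases "schur_decomposition A rs")
  with schur_decomposition[OF A split] have sim: "similar_mat_wit A B P Q"
    and ut: "upper_triangular B" and diag: "diag_mat B = rs" by auto
  have B: "B \<in> carrier_mat n n" using sim A unfolding similar_mat_wit_def Let_def by auto
  have square: "M ^\<^sub>m 2 = M * M" if "M \<in> carrier_mat n n" for M :: "'a mat"
    using that by (simp add: numeral_2_eq_2)
  have "mat_trace (A * A) = mat_trace (B * B)"
    using mat_trace_similar[OF similar_mat_wit_pow[OF sim, of 2]] A B by (simp add: square)
  also have "\<dots> = (\<Sum>i<n. (B $$ (i,i))^2)" by (rule mat_trace_square_upper_triangular[OF B ut])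
  also have "\<dots> = (\<Sum>r\<leftarrow>rs. r^2)"
    unfolding diag[symmetric] diag_mat_def using B
    by (simp add: sum_list_distinct_conv_sum_set lessThan_atLeast0 comp_def)
  finally show ?thesis by simp
qed

lemma substochastic_eigenvalue_abs_le_1:
  fixes A :: "real mat"
  assumes A: "A \<in> carrier_mat n n"
    and nonneg: "\<And>j k. j < n \<Longrightarrow> k < n \<Longrightarrow> A $$ (j,k) \<ge> 0"
    and rows: "\<And>j. j < n \<Longrightarrow> (\<Sum>k<n. A $$ (j,k)) \<le> 1"
    and eig: "eigenvalue A e"
  shows "\<bar>e\<bar> \<le> 1"
proof -
  obtain v where v: "v \<in> carrier_vec n" "v \<noteq> 0\<^sub>v n" "A *\<^sub>v v = e \<cdot>\<^sub>v v"
    using eig A unfolding eigenvalue_def eigenvector_def by auto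
  obtain i0 where i0: "i0 < n" "v $ i0 \<noteq> 0"
    using v(1,2) by (metis vec_eq_iff carrier_vecD index_zero_vec(1,2))
  \<comment> \<open>Read the eigen-equation at a coordinate of maximal modulus.\<close>
  have fin: "finite ((\<lambda>k. \<bar>v $ k\<bar>) ` {..<n})" by simp
  have ne: "(\<lambda>k. \<bar>v $ k\<bar>) ` {..<n} \<noteq> {}" using i0 by auto
  obtain i where i: "i < n" "\<bar>v $ i\<bar> = Max ((\<lambda>k. \<bar>v $ k\<bar>) ` {..<n})"
    using Max_in[OF fin ne] by auto
  have max: "\<bar>v $ k\<bar> \<le> \<bar>v $ i\<bar>" if "k < n" for k using i(2) Max_ge[OF fin] that by auto
  have pos: "\<bar>v $ i\<bar> > 0" using max[OF i0(1)] i0(2) by linarith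
  have "e * v $ i = (\<Sum>k<n. A $$ (i,k) * v $ k)"
  proof -
    have "(A *\<^sub>v v) $ i = (e \<cdot>\<^sub>v v) $ i" using v(3) by simp
    thus ?thesis using i A v(1) by (simp add: scalar_prod_def lessThan_atLeast0)
  qed
  hence "\<bar>e\<bar> * \<bar>v $ i\<bar> = \<bar>\<Sum>k<n. A $$ (i,k) * v $ k\<bar>" by (metis abs_mult)
  also have "\<dots> \<le> (\<Sum>k<n. \<bar>A $$ (i,k) * v $ k\<bar>)" by (rule sum_abs)
  also have "\<dots> \<le> (\<Sum>k<n. A $$ (i,k) * \<bar>v $ i\<bar>)"
    using nonneg[OF i(1)] max by (intro sum_mono) (simp add: abs_mult mult_left_mono)
  also have "\<dots> = (\<Sum>k<n. A $$ (i,k)) * \<bar>v $ i\<bar>" by (simp add: sum_distrib_right)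
  also have "\<dots> \<le> 1 * \<bar>v $ i\<bar>" using rows[OF i(1)] pos by (intro mult_right_mono) auto
  finally show ?thesis using pos by simp
qed

lemma abs_nth_le_if_sorted_desc:
  fixes xs :: "'a::linordered_idom list"
  assumes "sorted (rev xs)" "i \<le> k" "k \<le> j" "j < length xs"
    and "\<bar>xs ! i\<bar> \<le> l" "\<bar>xs ! j\<bar> \<le> l"
  shows "\<bar>xs ! k\<bar> \<le> l"
proof -
  have "xs ! k \<le> xs ! i" using sorted_rev_nth_mono[OF assms(1,2)] assms(3,4) by simp
  moreover have "xs ! j \<le> xs ! k" using sorted_rev_nth_mono[OF assms(1,3,4)] .
  ultimately show ?thesis using assms(5,6) by (auto simp: abs_le_iff)
qed

definition regular_walk_matrix :: "nat \<Rightarrow> nat \<Rightarrow> (nat \<Rightarrow> nat \<Rightarrow> bool) \<Rightarrow> real mat" where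
  "regular_walk_matrix n r E = mat n n (\<lambda>(j,k). if E j k then 1 / real r else 0)"

lemma regular_walk_matrix_row_sum:
  assumes deg: "\<And>j. j < n \<Longrightarrow> card {k. k < n \<and> E j k} = r" and "r \<ge> 1" and "j < n"
  shows "(\<Sum>k<n. regular_walk_matrix n r E $$ (j,k)) = 1"
proof -
  have "(\<Sum>k<n. regular_walk_matrix n r E $$ (j,k)) = (\<Sum>k\<in>{k. k < n \<and> E j k}. 1 / real r)"
    unfolding regular_walk_matrix_def using \<open>j < n\<close>
    by (simp add: sum.If_cases lessThan_def Collect_conj_eq Int_commute)
  thus ?thesis using deg[OF \<open>j < n\<close>] \<open>r \<ge> 1\<close> by simp
qed

lemma mat_trace_square_regular_walk_matrix:
  assumes sym: "\<And>j k. j < n \<Longrightarrow> k < n \<Longrightarrow> E j k = E k j"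
    and deg: "\<And>j. j < n \<Longrightarrow> card {k. k < n \<and> E j k} = r" and "r \<ge> 1"
  shows "mat_trace (regular_walk_matrix n r E * regular_walk_matrix n r E) = real n / real r"
proof -
  let ?W = "regular_walk_matrix n r E"
  have W: "?W \<in> carrier_mat n n" unfolding regular_walk_matrix_def by simp
  have "(\<Sum>k<n. ?W $$ (j,k) * ?W $$ (k,j)) = (\<Sum>k<n. ?W $$ (j,k)) / real r" if "j < n" for j
    using that sym unfolding regular_walk_matrix_def
    by (auto simp: sum_divide_distrib intro!: sum.cong)
  hence "mat_trace (?W * ?W) = (\<Sum>j<n. 1 / real r)"
    unfolding mat_trace_mult[OF W W] using regular_walk_matrix_row_sum[OF deg \<open>r \<ge> 1\<close>]
    by (intro sum.cong) simp_all
  thus ?thesis by simp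
qed

lemma eigenvalues_desc_regular_walk_matrix:
  assumes r: "r \<ge> 1"
    and sym: "\<And>j k. j < n \<Longrightarrow> k < n \<Longrightarrow> E j k = E k j"
    and deg: "\<And>j. j < n \<Longrightarrow> card {k. k < n \<and> E j k} = r"
  defines "es \<equiv> eigenvalues_desc (regular_walk_matrix n r E)"
  shows "length es = n" and "sorted (rev es)" and "(\<Sum>k<n. (es ! k)^2) = real n / real r"
    and "n > 0 \<Longrightarrow> \<bar>es ! 0\<bar> \<le> 1"
proof -
  let ?W = "regular_walk_matrix n r E"
  have W: "?W \<in> carrier_mat n n" unfolding regular_walk_matrix_def by simp
  have W_sym: "?W $$ (j,k) = ?W $$ (k,j)" if "j < n" "k < n" for j k
    using sym[OF that] that unfolding regular_walk_matrix_def by simp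
  have W_nonneg: "?W $$ (j,k) \<ge> 0" if "j < n" "k < n" for j k
    using that unfolding regular_walk_matrix_def by simp
  obtain rs where rs: "char_poly ?W = (\<Prod>r\<leftarrow>rs. [:- r, 1:])" "length rs = n"
    by (rule real_symmetric_char_poly_splits[OF W W_sym])
  have es: "es = rev (sort rs)" unfolding es_def by (rule eigenvalues_desc_split[OF rs(1)])
  show len: "length es = n" and "sorted (rev es)" using es rs(2) by simp_all
  have "(\<Sum>k<n. (es ! k)^2) = (\<Sum>r\<leftarrow>es. r^2)"
    using len by (simp add: sum_list_sum_nth lessThan_atLeast0)
  also have "\<dots> = (\<Sum>r\<leftarrow>rs. r^2)"
  proof -
    have "mset (map (\<lambda>r. r^2) es) = mset (map (\<lambda>r. r^2) rs)" unfolding es by simp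
    thus ?thesis by (metis sum_mset_sum_list)
  qed
  also have "\<dots> = real n / real r"
    using sum_squares_eigenvalues_eq_trace[OF W rs(1)] mat_trace_square_regular_walk_matrix[OF sym deg r]
    by simp
  finally show "(\<Sum>k<n. (es ! k)^2) = real n / real r" .
  assume "n > 0"
  hence "es ! 0 \<in> set es" using len by simp
  hence "es ! 0 \<in> set rs" unfolding es by simp
  hence "poly (char_poly ?W) (es ! 0) = 0"
    unfolding rs(1) by (simp add: poly_prod_list prod_list_zero_iff)
  hence "eigenvalue ?W (es ! 0)" using eigenvalue_root_char_poly[OF W] by simp
  thus "\<bar>es ! 0\<bar> \<le> 1"
    using substochastic_eigenvalue_abs_le_1[OF W W_nonneg] regular_walk_matrix_row_sum[OF deg r]
    by simp
qed

lemma regular_walk_matrix_spectral_bound: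
  assumes n2: "n \<ge> 2" and r: "r \<ge> 1"
    and sym: "\<And>j k. j < n \<Longrightarrow> k < n \<Longrightarrow> E j k = E k j"
    and deg: "\<And>j. j < n \<Longrightarrow> card {k. k < n \<and> E j k} = r"
    and lam1: "\<bar>eigenvalues_desc (regular_walk_matrix n r E) ! 1\<bar> \<le> lam"
    and lam2: "\<bar>eigenvalues_desc (regular_walk_matrix n r E) ! (n - 1)\<bar> \<le> lam"
  shows "real n / real r \<le> 1 + real (n - 1) * lam^2"
proof -
  define es where "es = eigenvalues_desc (regular_walk_matrix n r E)"
  note es = eigenvalues_desc_regular_walk_matrix[OF r sym deg, folded es_def]
  have top: "(es ! 0)^2 \<le> 1"
    using es(4) n2 abs_le_square_iff[of "es ! 0" 1] by simp
  have rest: "(es ! k)^2 \<le> lam^2" if "1 \<le> k" "k < n" for k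
  proof -
    have "\<bar>es ! k\<bar> \<le> lam"
      using es(1,2) lam1 lam2 that unfolding es_def[symmetric]
      by (intro abs_nth_le_if_sorted_desc[of es 1 k "n - 1"]) auto
    from power_mono[OF this abs_ge_zero, of 2] show ?thesis by simp
  qed
  have "real n / real r = (es ! 0)^2 + (\<Sum>k\<in>{1..<n}. (es ! k)^2)"
    using es(3) n2 by (simp add: lessThan_atLeast0 sum.atLeast_Suc_lessThan)
  also have "\<dots> \<le> 1 + (\<Sum>k\<in>{1..<n}. lam^2)"
    using top rest by (intro add_mono sum_mono) auto
  finally show ?thesis by simp
qed

lemma finite_cluster: "finite (cluster n i)"
  by (simp add: cluster_def)

lemma card_cluster: "i \<in> {1,2} \<Longrightarrow> card (cluster n i) = n"
  by (auto simp: cluster_def)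

lemma cluster_Int_other: "i \<in> {1,2} \<Longrightarrow> cluster n i \<inter> cluster n (3 - i) = {}"
  by (auto simp: cluster_def)

lemma cluster_Un_other: "i \<in> {1,2} \<Longrightarrow> cluster n i \<union> cluster n (3 - i) = {..<2*n}"
  by (auto simp: cluster_def)

lemma cluster_lt: "i \<in> {1,2} \<Longrightarrow> v \<in> cluster n i \<Longrightarrow> v < 2*n"
  by (auto simp: cluster_def)

lemma clustered_regular_edge_lt:
  "clustered_regular n d b E \<Longrightarrow> E u v \<Longrightarrow> u < 2*n \<and> v < 2*n"
  unfolding clustered_regular_def by blast

lemma clustered_regular_sym: "clustered_regular n d b E \<Longrightarrow> E u v \<Longrightarrow> E v u"
  unfolding clustered_regular_def by blast

lemma clustered_regular_degree:
  "clustered_regular n d b E \<Longrightarrow> v < 2*n \<Longrightarrow> card {u. E v u} = d"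
  unfolding clustered_regular_def by blast

lemma clustered_regular_cross_degree:
  assumes "clustered_regular n d b E" "i \<in> {1,2}" "v \<in> cluster n i"
  shows "card {u \<in> cluster n (3 - i). E v u} = b"
proof -
  have "\<forall>v\<in>cluster n 1. card {u \<in> cluster n 2. E v u} = b"
    "\<forall>v\<in>cluster n 2. card {u \<in> cluster n 1. E v u} = b"
    using assms(1) unfolding clustered_regular_def by blast+
  moreover have "i = 1 \<or> i = 2" using assms(2) by blast
  ultimately show ?thesis using assms(3) by auto
qed

lemma clustered_regular_not_bipartite:
  "clustered_regular n d b E \<Longrightarrow> i \<in> {1,2} \<Longrightarrow> \<not> bipartite_on (cluster n i) E"
  unfolding clustered_regular_def by blast

lemma clustered_regular_finite_neighbours:
  assumes "clustered_regular n d b E"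
  shows "finite {u. E v u}"
proof (rule finite_subset)
  show "{u. E v u} \<subseteq> {..<2*n}" using clustered_regular_edge_lt[OF assms] by blast
qed simp

lemma clustered_regular_inner_degree:
  assumes cr: "clustered_regular n d b E" and i: "i \<in> {1,2}" and v: "v \<in> cluster n i"
  shows "card {u \<in> cluster n i. E v u} + b = d"
proof -
  let ?V = "cluster n i" and ?W = "cluster n (3 - i)"
  have split: "{u. E v u} = {u \<in> ?V. E v u} \<union> {u \<in> ?W. E v u}"
    using clustered_regular_edge_lt[OF cr] cluster_Un_other[OF i] by blast
  have disjoint: "{u \<in> ?V. E v u} \<inter> {u \<in> ?W. E v u} = {}"
    using cluster_Int_other[OF i] by blast
  have "d = card {u. E v u}" by (rule clustered_regular_degree[OF cr cluster_lt[OF i v], symmetric])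
  also have "\<dots> = card ({u \<in> ?V. E v u} \<union> {u \<in> ?W. E v u})" by (rule arg_cong[OF split])
  also have "\<dots> = card {u \<in> ?V. E v u} + card {u \<in> ?W. E v u}"
    by (rule card_Un_disjoint[OF _ _ disjoint]) (simp_all add: finite_cluster)
  finally have "d = card {u \<in> ?V. E v u} + card {u \<in> ?W. E v u}" .
  thus ?thesis using clustered_regular_cross_degree[OF cr i v] by simp
qed

lemma lambda_param_ge:
  assumes "i \<in> {1,2}" "k \<in> {1, n - 1}"
  shows "\<bar>eigenvalues_desc (walk_matrix n d b E i) ! k\<bar> \<le> lambda_param n d b E"
proof -
  let ?S = "{\<bar>eigenvalues_desc (walk_matrix n d b E i) ! k\<bar> | i k. i \<in> {1,2::nat} \<and> k \<in> {1, n - 1}}"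
  have "?S \<subseteq> (\<lambda>(i,k). \<bar>eigenvalues_desc (walk_matrix n d b E i) ! k\<bar>) ` ({1,2} \<times> {1, n - 1})"
    by auto
  hence "finite ?S" by (rule finite_subset) auto
  moreover have "\<bar>eigenvalues_desc (walk_matrix n d b E i) ! k\<bar> \<in> ?S" using assms by blast
  ultimately show ?thesis unfolding lambda_param_def by (rule Max_ge)
qed

lemma clustered_regular_inner_degree_ge_1:
  assumes cr: "clustered_regular n d b E"
  shows "d - b \<ge> 1"
proof -
  \<comment> \<open>An edgeless cluster would be bipartite.\<close>
  have "\<not> (\<forall>u\<in>cluster n 1. \<forall>v\<in>cluster n 1. E u v \<longrightarrow> True \<noteq> True)"
    using clustered_regular_not_bipartite[OF cr, of 1] unfolding bipartite_on_def by blast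
  then obtain u v where uv: "u \<in> cluster n 1" "v \<in> cluster n 1" "E u v" by blast
  have "{w \<in> cluster n 1. E u w} \<noteq> {}" using uv by blast
  hence "card {w \<in> cluster n 1. E u w} \<ge> 1"
    by (simp add: Suc_le_eq card_gt_0_iff finite_cluster)
  thus ?thesis using clustered_regular_inner_degree[OF cr _ uv(1)] by force
qed

lemma clustered_regular_spectral_bound:
  assumes cr: "clustered_regular n d b E" and n2: "n \<ge> 2"
  shows "real n / real (d - b) \<le> 1 + real (n - 1) * (lambda_param n d b E)^2"
proof -
  have deg: "card {k. k < n \<and> E j k} = d - b" if "j < n" for j
  proof -
    have "{k. k < n \<and> E j k} = {u \<in> cluster n 1. E j u}" by (auto simp: cluster_def)
    thus ?thesis using clustered_regular_inner_degree[OF cr, of 1 j] that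
      by (simp add: cluster_def)
  qed
  have walk: "walk_matrix n d b E 1 = regular_walk_matrix n (d - b) E"
    unfolding walk_matrix_def regular_walk_matrix_def by simp
  show ?thesis
  proof (rule regular_walk_matrix_spectral_bound[OF n2 clustered_regular_inner_degree_ge_1[OF cr] _ deg])
    show "E j k = E k j" for j k using clustered_regular_sym[OF cr] by blast
    show "\<bar>eigenvalues_desc (regular_walk_matrix n (d - b) E) ! 1\<bar> \<le> lambda_param n d b E"
      "\<bar>eigenvalues_desc (regular_walk_matrix n (d - b) E) ! (n - 1)\<bar> \<le> lambda_param n d b E"
      using lambda_param_ge[of 1 _ n d b E] unfolding walk by auto
  qed
qed

lemma clustered_regular_inner_degree_lower_bound:
  assumes cr: "clustered_regular n d b E" and n2: "n \<ge> 2"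
    and lam: "lambda_param n d b E \<le> c2 * real n powr (-1/4)"
  shows "real n \<le> (1 + c2^2 * sqrt (real n)) * real (d - b)"
proof -
  let ?lam = "lambda_param n d b E"
  have npos: "real n > 0" using n2 by simp
  have "0 \<le> ?lam" using lambda_param_ge[of 1 1 n d b E] by auto
  hence "?lam^2 \<le> (c2 * real n powr (-1/4))^2" using lam by (intro power_mono) auto
  also have "\<dots> = c2^2 * (real n powr (-1/4) * real n powr (-1/4))"
    by (simp add: power2_eq_square)
  also have "\<dots> = c2^2 / sqrt (real n)"
    using npos by (simp add: powr_add[symmetric] powr_minus_divide powr_half_sqrt)
  finally have "real (n - 1) * ?lam^2 \<le> real n * (c2^2 / sqrt (real n))"
    by (intro mult_mono) auto
  also have "\<dots> = c2^2 * sqrt (real n)"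
    using npos by (simp add: field_simps)
  finally have "real n / real (d - b) \<le> 1 + c2^2 * sqrt (real n)"
    using clustered_regular_spectral_bound[OF cr n2] by (meson add_left_mono order_trans)
  moreover have "real (d - b) > 0" using clustered_regular_inner_degree_ge_1[OF cr] by simp
  ultimately show ?thesis by (simp add: divide_le_eq)
qed

lemma clustered_regular_degree_ge:
  assumes cr: "clustered_regular n d b E" and n2: "n \<ge> 2"
    and lam: "lambda_param n d b E \<le> c2 * real n powr (-1/4)"
    and dense: "L^2 * (1 + c2^2 * sqrt (real n)) \<le> real n"
  shows "L^2 \<le> real d"
proof -
  have "L^2 * (1 + c2^2 * sqrt (real n)) \<le> real (d - b) * (1 + c2^2 * sqrt (real n))"
    using dense clustered_regular_inner_degree_lower_bound[OF cr n2 lam] by (simp add: mult.commute)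
  hence "L^2 \<le> real (d - b)" by (simp add: add_pos_nonneg)
  thus ?thesis by simp
qed

definition disagreements :: "nat set \<Rightarrow> bool \<Rightarrow> (nat \<Rightarrow> bool) \<Rightarrow> nat" where
  "disagreements S R x = card {v \<in> S. x v \<noteq> R}"

lemma bias_eq_disagreements:
  assumes "finite S"
  shows "bias S x = (if R then real (card S) - 2 * real (disagreements S R x)
                     else 2 * real (disagreements S R x) - real (card S))"
proof -
  have "{v \<in> S. x v} \<union> {v \<in> S. \<not> x v} = S" "{v \<in> S. x v} \<inter> {v \<in> S. \<not> x v} = {}" by blast+
  hence "card {v \<in> S. x v} + card {v \<in> S. \<not> x v} = card S"
    using assms by (metis card_Un_disjoint finite_Un)
  thus ?thesis unfolding bias_def disagreements_def by (cases R) auto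
qed

lemma two_disagreements_le_of_abs_bias:
  assumes "finite S" and "real (card S) - L \<le> \<bar>bias S x\<bar>"
  shows "2 * real (disagreements S (bias S x > 0) x) \<le> L"
  using assms bias_eq_disagreements[OF assms(1), of x "bias S x > 0"] by (auto split: if_splits)

lemma bias_of_few_disagreements:
  assumes "finite S" and "2 * real (disagreements S R x) < real (card S)"
  shows "\<bar>bias S x\<bar> = real (card S) - 2 * real (disagreements S R x)"
    and "sgn (bias S x) = (if R then 1 else -1)"
  using assms bias_eq_disagreements[OF assms(1), of x R] by (auto split: if_splits)

lemma prob_two_choices_run_leaves_le:
  assumes BA: "B \<subseteq> A" and p: "p \<ge> 0"
    and step: "\<And>y. y \<in> A \<Longrightarrow> measure_pmf.prob (two_choices_step n E y) (- B) \<le> p"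
  shows "x \<in> A \<Longrightarrow> measure_pmf.prob (two_choices_run n E T x) {xs. \<exists>y\<in>set xs. y \<notin> B} \<le> real T * p"
proof (induction T arbitrary: x)
  case (Suc T)
  let ?Bad = "{xs. \<exists>y\<in>set xs. y \<notin> B}"
  \<comment> \<open>Either the first step leaves \<open>B\<close>, or the remaining run does, started inside \<open>B \<subseteq> A\<close>.\<close>
  have "emeasure (two_choices_run n E (Suc T) x) ?Bad =
    (\<integral>\<^sup>+y. emeasure (map_pmf (Cons y) (two_choices_run n E T y)) ?Bad \<partial>two_choices_step n E x)"
    by simp
  also have "\<dots> \<le> (\<integral>\<^sup>+y. indicator (- B) y + ennreal (real T * p) \<partial>two_choices_step n E x)"
  proof (intro nn_integral_mono)
    fix y
    show "emeasure (map_pmf (Cons y) (two_choices_run n E T y)) ?Bad \<le> indicator (- B) y + ennreal (real T * p)"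
    proof (cases "y \<in> B")
      case True
      hence "emeasure (map_pmf (Cons y) (two_choices_run n E T y)) ?Bad
          = ennreal (measure_pmf.prob (two_choices_run n E T y) ?Bad)"
        by (simp add: vimage_def measure_pmf.emeasure_eq_measure)
      also have "\<dots> \<le> ennreal (real T * p)" using Suc.IH[of y] True BA by (intro ennreal_leI) auto
      finally show ?thesis by (simp add: True)
    next
      case False
      have "emeasure (map_pmf (Cons y) (two_choices_run n E T y)) ?Bad \<le> 1"
        by (simp add: measure_pmf.emeasure_le_1)
      thus ?thesis using False by (simp add: add_increasing2)
    qed
  qed
  also have "\<dots> = ennreal (measure_pmf.prob (two_choices_step n E x) (- B) + real T * p)"
    using p by (simp add: nn_integral_add measure_pmf.emeasure_space_1
        measure_pmf.emeasure_eq_measure ennreal_plus)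
  also have "\<dots> \<le> ennreal (real (Suc T) * p)"
    using step[OF Suc.prems] by (intro ennreal_leI) (simp add: algebra_simps)
  finally show ?case using p by (simp add: measure_pmf.emeasure_eq_measure)
qed simp

lemma prob_two_choices_run_stays_ge:
  assumes "B \<subseteq> A" and "p \<ge> 0"
    and "\<And>y. y \<in> A \<Longrightarrow> measure_pmf.prob (two_choices_step n E y) (- B) \<le> p"
    and "x \<in> A"
  shows "1 - real T * p \<le> measure_pmf.prob (two_choices_run n E T x) {xs. \<forall>y\<in>set xs. y \<in> B}"
proof -
  let ?M = "two_choices_run n E T x" and ?Bad = "{xs. \<exists>y\<in>set xs. y \<notin> B}"
  have "{xs. \<forall>y\<in>set xs. y \<in> B} = space (measure_pmf ?M) - ?Bad" by auto
  hence "measure_pmf.prob ?M {xs. \<forall>y\<in>set xs. y \<in> B} = 1 - measure_pmf.prob ?M ?Bad"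
    by (simp only:) (rule measure_pmf.prob_compl, simp)
  moreover have "measure_pmf.prob ?M ?Bad \<le> real T * p"
    by (rule prob_two_choices_run_leaves_le) (use assms in auto)
  ultimately show ?thesis by linarith
qed

lemma expectation_bool_pmf:
  fixes f :: "bool \<Rightarrow> real"
  shows "measure_pmf.expectation M f = f True * pmf M True + f False * pmf M False"
  by (subst integral_measure_pmf_real[where A = UNIV]) (auto simp: UNIV_bool)

lemma expectation_Pi_pmf_pow_disagreements_le:
  fixes p :: "nat \<Rightarrow> bool pmf"
  assumes finI: "finite I" and VI: "V \<subseteq> I" and t1: "t > 1"
  shows "measure_pmf.expectation (Pi_pmf I False p) (\<lambda>y. t ^ disagreements V R y)
     \<le> exp ((t - 1) * (\<Sum>v\<in>V. pmf (p v) (\<not> R)))"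
proof -
  define f where "f v b = (if v \<in> V \<and> b \<noteq> R then t else 1)" for v b
  have finV: "finite V" using finI VI finite_subset by blast
  \<comment> \<open>The moment \<open>t\<^sup>D\<close> factorises over the independent coordinates.\<close>
  have prod: "(\<lambda>y. t ^ disagreements V R y) = (\<lambda>y. \<Prod>v\<in>I. f v (y v))"
  proof
    fix y :: "nat \<Rightarrow> bool"
    have "(\<Prod>v\<in>I. f v (y v)) = (\<Prod>v\<in>{v\<in>I. v \<in> V \<and> y v \<noteq> R}. t)"
      unfolding f_def by (rule prod.inter_filter[OF finI, symmetric])
    also have "{v\<in>I. v \<in> V \<and> y v \<noteq> R} = {v\<in>V. y v \<noteq> R}" using VI by auto
    finally show "t ^ disagreements V R y = (\<Prod>v\<in>I. f v (y v))"
      unfolding disagreements_def by simp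
  qed
  have "measure_pmf.expectation (Pi_pmf I False p) (\<lambda>y. \<Prod>v\<in>I. f v (y v))
      = (\<Prod>v\<in>I. measure_pmf.expectation (p v) (f v))"
  proof (rule expectation_prod_Pi_pmf[OF finI])
    show "integrable (measure_pmf (p v)) (f v)" for v
      by (rule measure_pmf.integrable_const_bound[where B = t]) (use t1 in \<open>auto simp: f_def\<close>)
  qed (use t1 in \<open>auto simp: f_def\<close>)
  also have "\<dots> = (\<Prod>v\<in>I. if v \<in> V then 1 + (t - 1) * pmf (p v) (\<not> R) else 1)"
    unfolding expectation_bool_pmf f_def
    by (intro prod.cong refl) (cases R; simp add: pmf_False_conv_True algebra_simps)
  also have "\<dots> = (\<Prod>v\<in>V. 1 + (t - 1) * pmf (p v) (\<not> R))"
    using finI VI by (simp add: prod.If_cases Int_absorb1)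
  also have "\<dots> \<le> (\<Prod>v\<in>V. exp ((t - 1) * pmf (p v) (\<not> R)))"
    by (intro prod_mono conjI) (use t1 in \<open>auto simp: exp_ge_add_one_self\<close>)
  also have "\<dots> = exp ((t - 1) * (\<Sum>v\<in>V. pmf (p v) (\<not> R)))"
    by (simp add: exp_sum[OF finV] sum_distrib_left)
  finally show ?thesis unfolding prod .
qed

lemma prob_Pi_pmf_disagreements_gt_le:
  fixes p :: "nat \<Rightarrow> bool pmf"
  assumes finI: "finite I" and VI: "V \<subseteq> I" and t1: "t > 1"
  shows "measure_pmf.prob (Pi_pmf I False p) {y. real (disagreements V R y) > K}
     \<le> exp ((t - 1) * (\<Sum>v\<in>V. pmf (p v) (\<not> R))) / t powr K"
proof -
  let ?M = "Pi_pmf I False p" and ?X = "\<lambda>y. t ^ disagreements V R y"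
  have X_bounds: "0 \<le> ?X y" "?X y \<le> t ^ card I" for y
  proof -
    have "disagreements V R y \<le> card I"
      unfolding disagreements_def using VI finI by (intro card_mono) auto
    thus "0 \<le> ?X y" "?X y \<le> t ^ card I" using t1 by (auto intro: power_increasing)
  qed
  have "{y. real (disagreements V R y) > K} \<subseteq> {y \<in> space (measure_pmf ?M). ?X y \<ge> t powr K}"
  proof safe
    fix y assume "real (disagreements V R y) > K"
    hence "t powr K \<le> t powr real (disagreements V R y)" using t1 by (intro powr_mono) auto
    thus "t powr K \<le> ?X y" using t1 by (simp add: powr_realpow)
  qed simp
  hence "measure_pmf.prob ?M {y. real (disagreements V R y) > K}
      \<le> measure_pmf.prob ?M {y \<in> space (measure_pmf ?M). ?X y \<ge> t powr K}"
    by (rule measure_pmf.finite_measure_mono) simp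
  also have "\<dots> \<le> measure_pmf.expectation ?M ?X / t powr K"
  proof (rule integral_Markov_inequality_measure)
    show "integrable (measure_pmf ?M) ?X"
      by (rule measure_pmf.integrable_const_bound[where B = "t ^ card I"]) (use X_bounds in auto)
  qed (use X_bounds t1 in auto)
  also have "\<dots> \<le> exp ((t - 1) * (\<Sum>v\<in>V. pmf (p v) (\<not> R))) / t powr K"
    using expectation_Pi_pmf_pow_disagreements_le[OF finI VI t1] by (rule divide_right_mono) simp
  finally show ?thesis .
qed

lemma pmf_node_update_disagrees_le:
  fixes x :: "nat \<Rightarrow> bool" and R :: bool
  assumes fin: "finite {u. E v u}" and ne: "{u. E v u} \<noteq> {}"
  defines "\<delta> \<equiv> real (card {u. E v u})" and "F \<equiv> real (disagreements {u. E v u} R x)"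
  shows "pmf (node_update E x v) (\<not> R) \<le> (F / \<delta>)^2 + (if x v \<noteq> R then 2 * F / \<delta> else 0)"
proof -
  define N where "N = {u. E v u}"
  define g where "g u1 u2 = (if x u1 = x u2 then x u1 else x v)" for u1 u2
  define a where "a u = (if x u \<noteq> R then 1 else 0 :: real)" for u
  define c where "c = (if x v \<noteq> R then 1 else 0 :: real)"
  have \<delta>N: "\<delta> = real (card N)" unfolding \<delta>_def N_def ..
  have \<delta>: "\<delta> > 0" unfolding \<delta>_def using fin ne by (simp add: card_gt_0_iff)
  have "pmf (node_update E x v) (\<not> R) = (\<Sum>u1\<in>N. \<Sum>u2\<in>N. indicator {\<not> R} (g u1 u2)) / \<delta>^2"
    unfolding node_update_def pmf_bind N_def[symmetric] g_def \<delta>N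
    using ne fin by (simp add: N_def integral_pmf_of_set pmf_return sum_divide_distrib power2_eq_square)
  \<comment> \<open>The result differs from \<open>R\<close> only if both samples do, or if \<open>v\<close> itself does and one sample does.\<close>
  also have "\<dots> \<le> (\<Sum>u1\<in>N. \<Sum>u2\<in>N. a u1 * a u2 + c * (a u1 + a u2)) / \<delta>^2"
  proof (intro divide_right_mono sum_mono)
    show "indicator {\<not> R} (g u1 u2) \<le> a u1 * a u2 + c * (a u1 + a u2)" for u1 u2
      unfolding g_def a_def c_def by (cases "x u1"; cases "x u2"; cases "x v"; cases R) auto
  qed simp
  also have "(\<Sum>u1\<in>N. \<Sum>u2\<in>N. a u1 * a u2 + c * (a u1 + a u2)) = (\<Sum>u\<in>N. a u)^2 + c * (2 * \<delta> * (\<Sum>u\<in>N. a u))"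
    unfolding \<delta>N by (simp add: sum.distrib sum_distrib_left sum_distrib_right power2_eq_square algebra_simps)
  also have "(\<Sum>u\<in>N. a u) = F"
    unfolding a_def F_def disagreements_def N_def using fin by (simp add: sum.If_cases Int_def)
  also have "(F^2 + c * (2 * \<delta> * F)) / \<delta>^2 = (F / \<delta>)^2 + c * (2 * F / \<delta>)"
    using \<delta> by (simp add: field_simps power2_eq_square)
  finally show ?thesis unfolding c_def by (cases "x v = R") auto
qed

lemma card_disagreeing_neighbours_le:
  assumes cr: "clustered_regular n d b E" and i: "i \<in> {1,2}" and v: "v \<in> cluster n i"
  shows "disagreements {u. E v u} R x \<le> card {u \<in> cluster n i. E v u \<and> x u \<noteq> R} + b"
proof -
  let ?V = "cluster n i" and ?W = "cluster n (3 - i)"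
  have sub: "{w \<in> {u. E v u}. x w \<noteq> R} \<subseteq> {u \<in> ?V. E v u \<and> x u \<noteq> R} \<union> {u \<in> ?W. E v u}"
    using clustered_regular_edge_lt[OF cr] cluster_Un_other[OF i] by blast
  have "disagreements {u. E v u} R x \<le> card ({u \<in> ?V. E v u \<and> x u \<noteq> R} \<union> {u \<in> ?W. E v u})"
    unfolding disagreements_def by (rule card_mono[OF _ sub]) (simp add: finite_cluster)
  also have "\<dots> \<le> card {u \<in> ?V. E v u \<and> x u \<noteq> R} + card {u \<in> ?W. E v u}"
    by (rule card_Un_le)
  finally show ?thesis using clustered_regular_cross_degree[OF cr i v] by simp
qed

lemma sum_card_neighbours_with_le:
  assumes fin: "finite V" and sym: "\<And>u w. E u w \<Longrightarrow> E w u"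
    and fin_nbrs: "\<And>u. finite {w. E u w}" and deg: "\<And>u. u \<in> V \<Longrightarrow> card {w. E u w} \<le> d"
  shows "(\<Sum>v\<in>V. card {u \<in> V. E v u \<and> P u}) \<le> card {u \<in> V. P u} * d"
proof -
  have count: "card {u \<in> V. Q u} = (\<Sum>u\<in>V. if Q u then 1 else 0)" for Q
    using sum.inter_filter[OF fin, of "\<lambda>_. 1::nat" Q] by simp
  have "(\<Sum>v\<in>V. card {u \<in> V. E v u \<and> P u}) = (\<Sum>u\<in>V. \<Sum>v\<in>V. if E v u \<and> P u then 1 else 0)"
    unfolding count by (rule sum.swap)
  also have "\<dots> = (\<Sum>u\<in>V. if P u then card {v \<in> V. E v u} else 0)"
    unfolding count by (intro sum.cong refl) auto
  also have "\<dots> \<le> (\<Sum>u\<in>V. if P u then d else 0)"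
  proof (intro sum_mono)
    fix u assume "u \<in> V"
    have "card {v \<in> V. E v u} \<le> card {w. E u w}" using sym by (intro card_mono[OF fin_nbrs]) auto
    thus "(if P u then card {v \<in> V. E v u} else 0) \<le> (if P u then d else 0)"
      using deg[OF \<open>u \<in> V\<close>] by simp
  qed
  also have "\<dots> = card {u \<in> V. P u} * d"
    using sum.inter_filter[OF fin, of "\<lambda>_. d" P] by simp
  finally show ?thesis .
qed

lemma pmf_node_update_disagrees_le_cluster:
  fixes x :: "nat \<Rightarrow> bool" and R :: bool
  assumes cr: "clustered_regular n d b E" and i: "i \<in> {1,2}" and v: "v \<in> cluster n i" and d: "d > 0"
  defines "m \<equiv> real (disagreements (cluster n i) R x)"
    and "G \<equiv> real (card {u \<in> cluster n i. E v u \<and> x u \<noteq> R})" and "\<beta> \<equiv> real b / real d"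
  shows "pmf (node_update E x v) (\<not> R)
    \<le> 2 * m * G / real d^2 + 2 * \<beta>^2 + (if x v \<noteq> R then 2 * (m + real b) / real d else 0)"
proof -
  define F where "F = real (disagreements {u. E v u} R x)"
  have deg: "card {u. E v u} = d" by (rule clustered_regular_degree[OF cr cluster_lt[OF i v]])
  hence ne: "{u. E v u} \<noteq> {}" using d by (metis card_gt_0_iff)
  have FG: "F \<le> G + real b"
    unfolding F_def G_def using card_disagreeing_neighbours_le[OF cr i v, of R x] by linarith
  have Gm: "G \<le> m"
    unfolding G_def m_def disagreements_def by (intro of_nat_mono card_mono) (auto simp: finite_cluster)
  have "pmf (node_update E x v) (\<not> R) \<le> (F / real d)^2 + (if x v \<noteq> R then 2 * F / real d else 0)"
    using pmf_node_update_disagrees_le[where E = E and v = v and x = x and R = R,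
        OF clustered_regular_finite_neighbours[OF cr] ne]
    unfolding deg F_def .
  also have "(F / real d)^2 \<le> (G / real d + \<beta>)^2"
  proof (rule power_mono)
    show "F / real d \<le> G / real d + \<beta>"
      using FG d unfolding \<beta>_def add_divide_distrib[symmetric] by (simp add: divide_right_mono)
  qed (simp add: F_def)
  also have "\<dots> \<le> 2 * (G / real d)^2 + 2 * \<beta>^2"
  proof -
    have "(a + \<beta>)^2 \<le> 2 * a^2 + 2 * \<beta>^2" for a :: real
      using zero_le_power2[of "a - \<beta>"] by (simp add: power2_eq_square algebra_simps)
    thus ?thesis .
  qed
  also have "(G / real d)^2 \<le> m * G / real d^2"
    using Gm d unfolding G_def by (simp add: power2_eq_square divide_right_mono mult_right_mono)
  also have "(if x v \<noteq> R then 2 * F / real d else 0) \<le> (if x v \<noteq> R then 2 * (m + real b) / real d else 0)"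
    using FG Gm by (simp add: divide_right_mono)
  finally show ?thesis by (simp add: algebra_simps)
qed

lemma sum_pmf_node_update_disagrees_le:
  fixes x :: "nat \<Rightarrow> bool" and R :: bool
  assumes cr: "clustered_regular n d b E" and i: "i \<in> {1,2}" and d: "d > 0"
  defines "m \<equiv> real (disagreements (cluster n i) R x)" and "\<beta> \<equiv> real b / real d"
  shows "(\<Sum>v\<in>cluster n i. pmf (node_update E x v) (\<not> R)) \<le> 4 * m^2 / real d + 2 * real n * \<beta>^2 + 2 * m * \<beta>"
proof -
  let ?V = "cluster n i"
  define G where "G v = real (card {u \<in> ?V. E v u \<and> x u \<noteq> R})" for v
  have sum_G: "(\<Sum>v\<in>?V. G v) \<le> m * real d"
  proof -
    have "(\<Sum>v\<in>?V. card {u \<in> ?V. E v u \<and> x u \<noteq> R}) \<le> card {u \<in> ?V. x u \<noteq> R} * d"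
    proof (rule sum_card_neighbours_with_le[OF finite_cluster])
      show "card {w. E u w} \<le> d" if "u \<in> ?V" for u
        using clustered_regular_degree[OF cr cluster_lt[OF i that]] by simp
    qed (use clustered_regular_sym[OF cr] clustered_regular_finite_neighbours[OF cr] in auto)
    hence "real (\<Sum>v\<in>?V. card {u \<in> ?V. E v u \<and> x u \<noteq> R}) \<le> real (card {u \<in> ?V. x u \<noteq> R} * d)"
      by (rule of_nat_mono)
    thus ?thesis unfolding G_def m_def disagreements_def by simp
  qed
  have if_sum: "(\<Sum>v\<in>?V. if x v \<noteq> R then t else 0) = m * t" for t
    unfolding m_def disagreements_def using sum.inter_filter[OF finite_cluster[of n i], of "\<lambda>_. t" "\<lambda>v. x v \<noteq> R"]
    by simp
  have "(\<Sum>v\<in>?V. pmf (node_update E x v) (\<not> R))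
      \<le> (\<Sum>v\<in>?V. 2 * m * G v / real d^2 + 2 * \<beta>^2 + (if x v \<noteq> R then 2 * (m + real b) / real d else 0))"
    unfolding m_def \<beta>_def G_def by (intro sum_mono pmf_node_update_disagrees_le_cluster[OF cr i _ d])
  also have "\<dots> = 2 * m * (\<Sum>v\<in>?V. G v) / real d^2 + 2 * real n * \<beta>^2 + m * (2 * (m + real b) / real d)"
    unfolding sum.distrib if_sum sum_divide_distrib[symmetric] sum_distrib_left[symmetric]
    by (simp add: card_cluster[OF i])
  also have "\<dots> \<le> 2 * m * (m * real d) / real d^2 + 2 * real n * \<beta>^2 + m * (2 * (m + real b) / real d)"
    using sum_G by (intro add_mono divide_right_mono mult_left_mono) (auto simp: m_def)
  also have "\<dots> = 4 * m^2 / real d + 2 * real n * \<beta>^2 + 2 * m * \<beta>"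
    using d unfolding \<beta>_def by (simp add: field_simps power2_eq_square)
  finally show ?thesis .
qed

lemma sum_pmf_node_update_disagrees_le_const:
  fixes x :: "nat \<Rightarrow> bool" and R :: bool and c1 L :: real
  assumes cr: "clustered_regular n d b E" and i: "i \<in> {1,2}" and L: "L > 0"
    and dL: "L^2 \<le> real d" and bd: "real b / real d \<le> c1 * real n powr (-1/2)"
    and Lc1: "L * c1 * real n powr (-1/2) \<le> 1"
    and few: "2 * real (disagreements (cluster n i) R x) \<le> L"
  shows "(\<Sum>v\<in>cluster n i. pmf (node_update E x v) (\<not> R)) \<le> 2 * c1^2 + 2"
proof -
  define m where "m = real (disagreements (cluster n i) R x)"
  have n: "real n > 0" using cr unfolding clustered_regular_def by simp
  have d: "d > 0" using L dL by (metis of_nat_0_less_iff less_le_trans zero_less_power)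
  have b0: "0 \<le> real b / real d" by simp
  have "4 * m^2 / real d \<le> 1"
  proof -
    have "(2 * m)^2 \<le> L^2" using few by (intro power_mono) (auto simp: m_def)
    thus ?thesis using dL d by (simp add: power_mult_distrib divide_le_eq)
  qed
  moreover have "2 * real n * (real b / real d)^2 \<le> 2 * c1^2"
  proof -
    have "(real b / real d)^2 \<le> (c1 * real n powr (-1/2))^2" using b0 bd by (intro power_mono) auto
    also have "\<dots> = c1^2 / real n"
      using n by (simp add: power_mult_distrib power2_eq_square powr_add[symmetric] powr_minus_divide)
    finally have "real n * (real b / real d)^2 \<le> c1^2" using n by (simp add: field_simps)
    thus ?thesis by simp
  qed
  moreover have "2 * m * (real b / real d) \<le> 1"
  proof -
    have "2 * m * (real b / real d) \<le> L * (c1 * real n powr (-1/2))"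
      using few b0 bd L by (intro mult_mono) (auto simp: m_def)
    thus ?thesis using Lc1 by (simp add: mult.assoc)
  qed
  ultimately show ?thesis
    using sum_pmf_node_update_disagrees_le[OF cr i d, where x = x and R = R] unfolding m_def by linarith
qed

lemma prob_two_choices_step_disagreements_gt_le:
  fixes y :: "nat \<Rightarrow> bool" and R :: "nat \<Rightarrow> bool" and c1 L K :: real
  assumes cr: "clustered_regular n d b E" and L: "L > 1"
    and dL: "L^2 \<le> real d" and bd: "real b / real d \<le> c1 * real n powr (-1/2)"
    and Lc1: "L * c1 * real n powr (-1/2) \<le> 1"
    and y: "\<And>i. i \<in> {1,2} \<Longrightarrow> 2 * real (disagreements (cluster n i) (R i) y) \<le> L"
  shows "measure_pmf.prob (two_choices_step n E y)
      {z. \<exists>i\<in>{1,2::nat}. K < real (disagreements (cluster n i) (R i) z)}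
    \<le> 2 * (exp (L * (2 * c1^2 + 2)) / L powr K)"
proof -
  let ?M = "two_choices_step n E y" and ?D = "\<lambda>i z. real (disagreements (cluster n i) (R i) z)"
  have each: "measure_pmf.prob ?M {z. K < ?D i z} \<le> exp (L * (2 * c1^2 + 2)) / L powr K"
    if i: "i \<in> {1,2}" for i
  proof -
    let ?\<mu> = "\<Sum>v\<in>cluster n i. pmf (node_update E y v) (\<not> R i)"
    have "?\<mu> \<le> 2 * c1^2 + 2"
      using L by (intro sum_pmf_node_update_disagrees_le_const[OF cr i _ dL bd Lc1 y[OF i]]) simp
    moreover have "0 \<le> ?\<mu>" by (simp add: sum_nonneg)
    ultimately have "(L - 1) * ?\<mu> \<le> L * (2 * c1^2 + 2)" using L by (intro mult_mono) auto
    moreover have "measure_pmf.prob ?M {z. K < ?D i z} \<le> exp ((L - 1) * ?\<mu>) / L powr K"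
      unfolding two_choices_step_def
      using cluster_lt[OF i] L by (intro prob_Pi_pmf_disagreements_gt_le) auto
    ultimately show ?thesis by (smt (verit) divide_right_mono exp_le_cancel_iff powr_ge_zero)
  qed
  have "{z. \<exists>i\<in>{1,2::nat}. K < ?D i z} = {z. K < ?D 1 z} \<union> {z. K < ?D 2 z}" by auto
  hence "measure_pmf.prob ?M {z. \<exists>i\<in>{1,2::nat}. K < ?D i z}
      \<le> measure_pmf.prob ?M {z. K < ?D 1 z} + measure_pmf.prob ?M {z. K < ?D 2 z}"
    by (simp add: measure_Un_le)
  thus ?thesis using each[of 1] each[of 2] by simp
qed

lemma bias_near_consensus_of_few_disagreements:
  assumes i: "i \<in> {1,2}" and x0: "bias (cluster n i) x0 \<noteq> 0"
    and y: "2 * real (disagreements (cluster n i) (0 < bias (cluster n i) x0) y) \<le> K"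
    and K: "K < real n"
  shows "real n - K \<le> \<bar>bias (cluster n i) y\<bar>"
    and "sgn (bias (cluster n i) y) = sgn (bias (cluster n i) x0)"
proof -
  note few = bias_of_few_disagreements[OF finite_cluster, of n i "0 < bias (cluster n i) x0" y]
  show "real n - K \<le> \<bar>bias (cluster n i) y\<bar>" using few(1) y K by (simp add: card_cluster[OF i])
  show "sgn (bias (cluster n i) y) = sgn (bias (cluster n i) x0)"
    using few(2) y K x0 by (simp add: card_cluster[OF i] sgn_if)
qed

lemma union_bound_exponent:
  fixes n c :: nat and \<mu> :: real
  defines "L \<equiv> ln (real n)"
  assumes L: "L > 1"
  shows "real (n ^ c) * (2 * (exp (L * \<mu>) / L powr (2 * (\<mu> + real c + 1) * L / ln L / 2)))
    = 2 * real n powr (-1)"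
proof -
  have n: "real n > 0" using L unfolding L_def by (cases "n = 0") auto
  have n1: "n \<noteq> 1" using L unfolding L_def by auto
  have "exp (L * \<mu>) = real n powr \<mu>" unfolding L_def using n by (simp add: powr_def mult.commute)
  moreover have "L powr (2 * (\<mu> + real c + 1) * L / ln L / 2) = real n powr (\<mu> + real c + 1)"
    using L n n1 unfolding L_def by (simp add: powr_def)
  ultimately show ?thesis
    using n by (simp add: powr_realpow[symmetric] powr_diff[symmetric] powr_add)
qed

lemma prob_two_choices_run_near_consensus:
  fixes c1 c2 C :: real and c :: nat
  assumes cr: "clustered_regular n d b E" and n2: "n \<ge> 2" and L1: "1 < ln (real n)"
    and bd: "real b / real d \<le> c1 * real n powr (-1/2)"
    and lam: "lambda_param n d b E \<le> c2 * real n powr (-1/4)"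
    and x0: "\<forall>i \<in> {1,2::nat}. \<bar>bias (cluster n i) x0\<bar> \<ge> real n - ln (real n)"
    and C_le: "C \<le> ln (ln (real n))"
    and dense: "ln (real n)^2 * (1 + c2^2 * sqrt (real n)) \<le> real n"
    and Lc1: "ln (real n) * c1 * real n powr (-1/2) \<le> 1"
    and C: "C = 2 * ((2 * c1^2 + 2) + real c + 1)"
  shows "1 - 2 * real n powr (-1) \<le> measure_pmf.prob (two_choices_run n E (n ^ c) x0)
         {xs. \<forall>x \<in> set xs. \<forall>i \<in> {1,2::nat}.
                \<bar>bias (cluster n i) x\<bar> \<ge> real n - C * ln (real n) / ln (ln (real n)) \<and>
                sgn (bias (cluster n i) x) = sgn (bias (cluster n i) x0)}"
    (is "_ \<le> measure_pmf.prob ?M ?target")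
proof -
  define L where "L = ln (real n)"
  define K where "K = C * L / ln L"
  define D where "D i y = real (disagreements (cluster n i) (0 < bias (cluster n i) x0) y)" for i y
  define A where "A = {y. \<forall>i\<in>{1,2::nat}. 2 * D i y \<le> L}"
  define B where "B = {y. \<forall>i\<in>{1,2::nat}. 2 * D i y \<le> K}"
  define p where "p = 2 * (exp (L * (2 * c1^2 + 2)) / L powr (K / 2))"
  have "C > 0" unfolding C by (simp add: add_pos_nonneg)
  hence lnL: "0 < ln L" using C_le unfolding L_def by linarith
  have K_L: "K \<le> L" using C_le lnL L1 unfolding K_def L_def by (simp add: field_simps)
  have L_n: "L < real n" unfolding L_def using n2 by (intro ln_less_self) simp
  have step: "measure_pmf.prob (two_choices_step n E y) (- B) \<le> p" if "y \<in> A" for y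
  proof -
    have "- B = {z. \<exists>i\<in>{1,2::nat}. K / 2 < D i z}" unfolding B_def by auto
    thus ?thesis unfolding p_def D_def
      using that L1 clustered_regular_degree_ge[OF cr n2 lam dense] bd Lc1 unfolding A_def L_def D_def
      by (simp only:) (rule prob_two_choices_step_disagreements_gt_le[OF cr]; auto)
  qed
  have x0_A: "x0 \<in> A"
    using x0 two_disagreements_le_of_abs_bias[OF finite_cluster] card_cluster
    unfolding A_def D_def L_def by simp
  have B_target: "{xs. \<forall>y\<in>set xs. y \<in> B} \<subseteq> ?target"
  proof (intro subsetI CollectI ballI; elim CollectE)
    fix xs x and i :: nat assume "\<forall>y\<in>set xs. y \<in> B" "x \<in> set xs" and i: "i \<in> {1,2}"
    hence "2 * D i x \<le> K" unfolding B_def by blast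
    moreover have "bias (cluster n i) x0 \<noteq> 0" using x0 i L_n unfolding L_def by auto
    ultimately show "\<bar>bias (cluster n i) x\<bar> \<ge> real n - C * ln (real n) / ln (ln (real n)) \<and>
        sgn (bias (cluster n i) x) = sgn (bias (cluster n i) x0)"
      using bias_near_consensus_of_few_disagreements[OF i] K_L L_n unfolding D_def K_def L_def
      by auto
  qed
  have "1 - 2 * real n powr (-1) = 1 - real (n ^ c) * p"
    using union_bound_exponent[of n c "2 * c1^2 + 2"] L1 unfolding p_def K_def L_def C by simp
  also have "\<dots> \<le> measure_pmf.prob ?M {xs. \<forall>y\<in>set xs. y \<in> B}"
  proof (rule prob_two_choices_run_stays_ge[OF _ _ step x0_A])
    show "B \<subseteq> A" unfolding A_def B_def using K_L by auto
  qed (simp add: p_def)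
  also have "\<dots> \<le> measure_pmf.prob ?M ?target"
    using B_target by (rule measure_pmf.finite_measure_mono) simp
  finally show ?thesis .
qed

lemma eventually_two_choices_parameters:
  fixes c1 c2 C :: real
  shows "eventually (\<lambda>n::nat. 2 \<le> n \<and> 1 < ln (real n) \<and> C \<le> ln (ln (real n)) \<and>
     ln (real n)^2 * (1 + c2^2 * sqrt (real n)) \<le> real n \<and>
     ln (real n) * c1 * real n powr (-1/2) \<le> 1) sequentially"
proof -
  have "filterlim (\<lambda>n::nat. ln (ln (real n))) at_top sequentially" by real_asymp
  hence "eventually (\<lambda>n::nat. C \<le> ln (ln (real n))) sequentially"
    unfolding filterlim_at_top by blast
  moreover have "eventually (\<lambda>n::nat. 1 < ln (real n)) sequentially" by real_asymp
  moreover have "eventually (\<lambda>n::nat. ln (real n)^2 * (1 + c2^2 * sqrt (real n)) \<le> real n) sequentially"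
    by real_asymp
  moreover have "eventually (\<lambda>n::nat. ln (real n) * c1 * real n powr (-1/2) \<le> 1) sequentially"
    by real_asymp
  ultimately show ?thesis using eventually_ge_at_top[of 2] by eventually_elim auto
qed

theorem lemma6:
  fixes c1 c2 :: real and c :: nat
  assumes "c1 > 0" and "c2 > 0"
  shows "\<exists>C K \<gamma> :: real. C > 0 \<and> K > 0 \<and> \<gamma> > 0 \<and> (\<exists>N0::nat. \<forall>n \<ge> N0.
     \<forall>d b E (x0 :: nat \<Rightarrow> bool).
       clustered_regular n d b E \<and>
       real b / real d \<le> c1 * real n powr (-1/2) \<and>
       lambda_param n d b E \<le> c2 * real n powr (-1/4) \<and>
       (\<forall>i \<in> {1,2::nat}. \<bar>bias (cluster n i) x0\<bar> \<ge> real n - ln (real n))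
     \<longrightarrow>
       measure_pmf.prob (two_choices_run n E (n ^ c) x0)
         {xs. \<forall>x \<in> set xs. \<forall>i \<in> {1,2::nat}.
                \<bar>bias (cluster n i) x\<bar> \<ge> real n - C * ln (real n) / ln (ln (real n)) \<and>
                sgn (bias (cluster n i) x) = sgn (bias (cluster n i) x0)}
       \<ge> 1 - K * real n powr (-\<gamma>))"
proof -
  define C where "C = 2 * ((2 * c1^2 + 2) + real c + 1)"
  have C0: "C > 0" unfolding C_def by (simp add: add_pos_nonneg)
  obtain N0 where N0: "\<And>n. n \<ge> N0 \<Longrightarrow> 2 \<le> n \<and> 1 < ln (real n) \<and> C \<le> ln (ln (real n)) \<and>
     ln (real n)^2 * (1 + c2^2 * sqrt (real n)) \<le> real n \<and> ln (real n) * c1 * real n powr (-1/2) \<le> 1"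
    using eventually_two_choices_parameters[of C c2 c1] unfolding eventually_sequentially by blast
  show ?thesis
    by (rule exI[of _ C], rule exI[of _ 2], rule exI[of _ 1])
      (use C0 N0 prob_two_choices_run_near_consensus[OF _ _ _ _ _ _ _ _ _ C_def]
        in \<open>auto intro!: exI[of _ N0]\<close>)
qed

end
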